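(* Let $n,m,k\ge 1$, let $S$ be a Boolean $n\times m$ matrix, and put $\bar n=n+2$, $\bar m=m+2$, $\bar k=k+2$. Let $\bar S$ be the Boolean $\bar n\times\bar m$ matrix whose first row is all ones, whose first column is all ones, whose entries $\bar s_{ij}$ with $i\ge 2$, $j=2$ or with $i=2$, $j\ge 2$ are $0$, and whose lower-right $n\times m$ block is $S$, i.e. $\bar s_{ij}=s_{i-2,j-2}$ for $i,j\ge 3$. Suppose there exist a Boolean $\bar n\times\bar k$ matrix $\bar E$ and a Boolean $\bar k\times\bar m$ matrix $\bar P$ with $\bar S=\bar E\cdot\bar P$. Then there also exist Boolean matrices $\bar E$ ($\bar n\times\bar k$) and $\bar P$ ($\bar k\times\bar m$) with $\bar S=\bar E\cdot\bar P$ which additionally satisfy: (i) the first row of $\bar E$ is all ones; (ii) the second row of $\bar E$ is $(1,0,\dots,0)$; (iii) $\bar e_{i2}=0$ for all $i\ge 3$; (iv) the first row of $\bar P$ is $(1,0,\dots,0)$; (v) the first column of $\bar P$ is all ones; (vi) $\bar p_{22}=1$.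
   Context: All matrices are over the Boolean algebra $(\{0,1\},\vee,\wedge)$. The Boolean matrix product of an $n\times k$ matrix $E=(e_{ia})$ and a $k\times m$ matrix $P=(p_{aj})$ is the $n\times m$ matrix $E\cdot P$ with entries $(E\cdot P)_{ij}=\bigvee_{a=1}^{k}(e_{ia}\wedge p_{aj})$. *)

theory Defs
  imports Main
begin

text \<open>Boolean matrices are functions nat => nat => bool, indexed 1-based;
only entries with indices within the stated dimensions are meaningful.\<close>

definition bool_mult :: "nat \<Rightarrow> (nat \<Rightarrow> nat \<Rightarrow> bool) \<Rightarrow> (nat \<Rightarrow> nat \<Rightarrow> bool) \<Rightarrow> nat \<Rightarrow> nat \<Rightarrow> bool" where
  "bool_mult k E P i j = (\<exists>a\<in>{1..k}. E i a \<and> P a j)"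

definition mat_eq :: "nat \<Rightarrow> nat \<Rightarrow> (nat \<Rightarrow> nat \<Rightarrow> bool) \<Rightarrow> (nat \<Rightarrow> nat \<Rightarrow> bool) \<Rightarrow> bool" where
  "mat_eq n m A B = (\<forall>i\<in>{1..n}. \<forall>j\<in>{1..m}. A i j = B i j)"

definition bar :: "(nat \<Rightarrow> nat \<Rightarrow> bool) \<Rightarrow> nat \<Rightarrow> nat \<Rightarrow> bool" where
  "bar S i j = (if i = 1 \<or> j = 1 then True
               else if i = 2 \<or> j = 2 then False
               else S (i - 2) (j - 2))"

end

theory Submission
  imports Defs
begin

(* Take any factorisation bar S = E * P with inner dimension k+2.  Entry (2,1) of bar S
   is 1, so some inner index a0 has E 2 a0 and P a0 1; since row 2 of bar S vanishes
   from column 2 on, row a0 of P vanishes there too.  Symmetrically entry (1,2) yields an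
   index a1 with E 1 a1 and P a1 2 whose column of E vanishes from row 3 on.  These two
   "skeleton" indices are distinct and contribute nothing to the lower-right block, so
   the remaining k indices alone produce S there.  Relabelling them as 3..k+2 by a
   bijection g, we build the normal form: inner index 1 carries the all-ones first row
   and column, inner index 2 carries the first row of bar S beyond column 1, and indices
   3..k+2 carry the old factors restricted to the lower-right block. *)

definition normal_E :: "(nat \<Rightarrow> nat) \<Rightarrow> (nat \<Rightarrow> nat \<Rightarrow> bool) \<Rightarrow> nat \<Rightarrow> nat \<Rightarrow> bool" where
  "normal_E g E i a = (i = 1 \<or> a = 1 \<or> (i \<ge> 3 \<and> a \<ge> 3 \<and> E i (g a)))"

definition normal_P :: "(nat \<Rightarrow> nat) \<Rightarrow> (nat \<Rightarrow> nat \<Rightarrow> bool) \<Rightarrow> nat \<Rightarrow> nat \<Rightarrow> bool" where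
  "normal_P g P a j = (j = 1 \<or> (a = 2 \<and> j \<ge> 2) \<or> (a \<ge> 3 \<and> j \<ge> 3 \<and> P (g a) j))"

lemma normal_form_shape:
  fixes g :: "nat \<Rightarrow> nat" and E P :: "nat \<Rightarrow> nat \<Rightarrow> bool"
  defines "E' \<equiv> normal_E g E" and "P' \<equiv> normal_P g P"
  shows "(\<forall>a\<in>{1..k+2}. E' 1 a)
     \<and> E' 2 1 \<and> (\<forall>a\<in>{2..k+2}. \<not> E' 2 a)
     \<and> (\<forall>i\<in>{3..n+2}. \<not> E' i 2)
     \<and> P' 1 1 \<and> (\<forall>j\<in>{2..m+2}. \<not> P' 1 j)
     \<and> (\<forall>a\<in>{1..k+2}. P' a 1)
     \<and> P' 2 2"
  by (auto simp: E'_def P'_def normal_E_def normal_P_def)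

text \<open>Outside the lower-right block the normal form reproduces the border of bar S:
  index 1 realises the first row and column, index 2 the rest of the first row,
  and nothing realises row 2 or column 2 beyond the first entry.\<close>

lemma normal_product_border:
  assumes "i \<ge> 1" "j \<ge> 1" "i \<le> 2 \<or> j \<le> 2"
  shows "bool_mult (k+2) (normal_E g E) (normal_P g P) i j = bar S i j"
proof (cases "i = 1 \<or> j = 1")
  case True
  then consider "j = 1" | "i = 1" "j \<ge> 2" using assms by linarith
  then show ?thesis
  proof cases
    case 1
    then show ?thesis
      by (auto simp: bool_mult_def bar_def normal_E_def normal_P_def intro!: bexI[of _ 1])
  next
    case 2
    then show ?thesis
      by (auto simp: bool_mult_def bar_def normal_E_def normal_P_def intro!: bexI[of _ 2])
  qed
next
  case False
  then show ?thesis
    using assms by (auto simp: bool_mult_def bar_def normal_E_def normal_P_def)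
qed

lemma normal_product_interior:
  assumes "i \<ge> 3" "j \<ge> 3"
  shows "bool_mult (k+2) (normal_E g E) (normal_P g P) i j
       = (\<exists>a\<in>g ` {3..k+2}. E i a \<and> P a j)"
proof
  assume "bool_mult (k+2) (normal_E g E) (normal_P g P) i j"
  then obtain b where "b \<in> {1..k+2}" "normal_E g E i b" "normal_P g P b j"
    unfolding bool_mult_def by blast
  with assms show "\<exists>a\<in>g ` {3..k+2}. E i a \<and> P a j"
    by (auto simp: normal_E_def normal_P_def)
next
  assume "\<exists>a\<in>g ` {3..k+2}. E i a \<and> P a j"
  then obtain b where "b \<in> {3..k+2}" "E i (g b)" "P (g b) j" by blast
  with assms show "bool_mult (k+2) (normal_E g E) (normal_P g P) i j"
    by (auto simp: bool_mult_def normal_E_def normal_P_def intro!: bexI[of _ b])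
qed

text \<open>Any factorisation of bar S has an index a0 realising entry (2,1) and an index a1
  realising entry (1,2); the zero row 2 and zero column 2 of bar S force row a0 of P
  and column a1 of E to vanish off the border.\<close>

lemma skeleton_indices:
  assumes "mat_eq (n+2) (m+2) (bar S) (bool_mult K E P)"
  obtains a0 a1 where "a0 \<in> {1..K}" "a1 \<in> {1..K}" "a0 \<noteq> a1"
    and "\<forall>j\<in>{2..m+2}. \<not> P a0 j" and "\<forall>i\<in>{3..n+2}. \<not> E i a1"
proof -
  have entry: "bar S i j = (\<exists>a\<in>{1..K}. E i a \<and> P a j)"
    if "i \<in> {1..n+2}" "j \<in> {1..m+2}" for i j
    using assms that unfolding mat_eq_def bool_mult_def by blast
  obtain a0 where a0: "a0 \<in> {1..K}" "E 2 a0"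
    using entry[of 2 1] by (auto simp: bar_def)
  obtain a1 where a1: "a1 \<in> {1..K}" "E 1 a1" "P a1 2"
    using entry[of 1 2] by (auto simp: bar_def)
  have row_a0: "\<not> P a0 j" if "j \<in> {2..m+2}" for j
    using entry[of 2 j] that a0 by (auto simp: bar_def)
  have col_a1: "\<not> E i a1" if "i \<in> {3..n+2}" for i
    using entry[of i 2] that a1 by (auto simp: bar_def)
  have "a0 \<noteq> a1" using row_a0[of 2] a1(3) by auto
  with a0(1) a1(1) row_a0 col_a1 show thesis using that by blast
qed

lemma product_avoiding:
  assumes "\<not> P a0 j" "\<not> E i a1"
  shows "bool_mult K E P i j = (\<exists>a\<in>{1..K} - {a0, a1}. E i a \<and> P a j)"
  using assms unfolding bool_mult_def by blast

lemma relabel_remaining: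
  fixes a0 a1 k :: nat
  assumes "a0 \<in> {1..k+2}" "a1 \<in> {1..k+2}" "a0 \<noteq> a1"
  obtains g where "g ` {3..k+2} = {1..k+2} - {a0, a1}"
proof -
  have "card ({1..k+2} - {a0, a1}) = card {3..k+2}"
    using assms by (simp add: card_Diff_subset)
  then obtain g where "bij_betw g {3..k+2} ({1..k+2} - {a0, a1})"
    by (metis finite_same_card_bij finite_Diff finite_atLeastAtMost)
  then show thesis using that unfolding bij_betw_def by blast
qed

theorem lemma1:
  fixes n m k :: nat and S :: "nat \<Rightarrow> nat \<Rightarrow> bool"
  assumes "n \<ge> 1" "m \<ge> 1" "k \<ge> 1"
    and "\<exists>E P. mat_eq (n+2) (m+2) (bar S) (bool_mult (k+2) E P)"
  shows "\<exists>E P. mat_eq (n+2) (m+2) (bar S) (bool_mult (k+2) E P)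
     \<and> (\<forall>a\<in>{1..k+2}. E 1 a)
     \<and> E 2 1 \<and> (\<forall>a\<in>{2..k+2}. \<not> E 2 a)
     \<and> (\<forall>i\<in>{3..n+2}. \<not> E i 2)
     \<and> P 1 1 \<and> (\<forall>j\<in>{2..m+2}. \<not> P 1 j)
     \<and> (\<forall>a\<in>{1..k+2}. P a 1)
     \<and> P 2 2"
proof -
  obtain E P where EP: "mat_eq (n+2) (m+2) (bar S) (bool_mult (k+2) E P)"
    using assms(4) by blast
  obtain a0 a1 where a: "a0 \<in> {1..k+2}" "a1 \<in> {1..k+2}" "a0 \<noteq> a1"
    and row_a0: "\<forall>j\<in>{2..m+2}. \<not> P a0 j" and col_a1: "\<forall>i\<in>{3..n+2}. \<not> E i a1"
    using skeleton_indices[OF EP] by blast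
  obtain g where g: "g ` {3..k+2} = {1..k+2} - {a0, a1}"
    using relabel_remaining[OF a] by blast
  have "mat_eq (n+2) (m+2) (bar S) (bool_mult (k+2) (normal_E g E) (normal_P g P))"
    unfolding mat_eq_def
  proof (intro ballI)
    fix i j assume i: "i \<in> {1..n+2}" and j: "j \<in> {1..m+2}"
    show "bar S i j = bool_mult (k+2) (normal_E g E) (normal_P g P) i j"
    proof (cases "i \<ge> 3 \<and> j \<ge> 3")
      case True
      have "bool_mult (k+2) (normal_E g E) (normal_P g P) i j
          = (\<exists>a\<in>{1..k+2} - {a0, a1}. E i a \<and> P a j)"
        using True g normal_product_interior by metis
      also have "\<dots> = bool_mult (k+2) E P i j"
        using True i j row_a0 col_a1 product_avoiding[of P a0 j E i a1] by simp
      also have "\<dots> = bar S i j" using EP i j by (simp add: mat_eq_def)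
      finally show ?thesis by simp
    next
      case False
      then have "i \<le> 2 \<or> j \<le> 2" by linarith
      moreover have "i \<ge> 1" "j \<ge> 1" using i j by auto
      ultimately show ?thesis using normal_product_border by metis
    qed
  qed
  then show ?thesis using normal_form_shape by blast
qed

end
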